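(* (i) Let $\boldsymbol{\pi}\in\mathbb{R}^n$ be a probability vector with $\boldsymbol{\pi}>0$ entrywise, and let $\mathcal{S}$ be an irreducible pattern. Then there exists a reversible stochastic matrix $X\in\mathbb{R}^{n\times n}(\mathcal{S})$ with stationary distribution $\boldsymbol{\pi}$ (in particular $\pi_iX_{ij}=\pi_jX_{ji}$ for all $i,j$). (ii) Let $\mathcal{P}$ and $\mathcal{S}$ be patterns, and let $P\in\mathbb{R}^{n\times n}(\mathcal{P})$ be a reversible stochastic matrix with stationary distribution $\boldsymbol{\pi}$. Then the set \[ \mathcal{F}=\{X\in\mathbb{R}^{n\times n}(\mathcal{S}\cup\mathcal{P}) : X_{ij}=P_{ij}\text{ for }\{i,j\}\in\mathcal{P}\setminus\mathcal{S},\ X\mathbf{1}=\mathbf{1},\ D_{\boldsymbol{\pi}}X=X^\top D_{\boldsymbol{\pi}},\ X\ge 0\} \] is not empty.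
   Context: A stochastic matrix is a nonnegative real matrix $P$ with $P\mathbf{1}=\mathbf{1}$, where $\mathbf{1}$ is the all-ones vector; $X\ge 0$ means entrywise nonnegativity. A stationary distribution of $P$ is a probability vector $\boldsymbol{\pi}$ with $\boldsymbol{\pi}^\top P=\boldsymbol{\pi}^\top$. A stochastic matrix is reversible if it is irreducible and its (unique, positive) stationary distribution $\boldsymbol{\pi}$ satisfies $\pi_iP_{ij}=\pi_jP_{ji}$ for all $i,j$, i.e. $D_{\boldsymbol{\pi}}P=P^\top D_{\boldsymbol{\pi}}$, with $D_{\boldsymbol{\pi}}$ the diagonal matrix with diagonal $\boldsymbol{\pi}$. A pattern $\mathcal{S}$ is a set of unordered pairs $\{i,j\}$, $1\le i,j\le n$, containing $\{i,i\}$ for all $i$. $\mathbb{R}^{n\times n}(\mathcal{S})$ is the set of real $n\times n$ matrices $\Delta$ with $\Delta_{ij}=\Delta_{ji}=0$ whenever $\{i,j\}\notin\mathcal{S}$. $\mathbb{R}^{n\times n}_{\mathrm{exact}}(\mathcal{S})$ is the set of real $n\times n$ matrices $\Delta$ such that ($\Delta_{ij}\neq0$ and $\Delta_{ji}\ne 0$) if and only if $\{i,j\}\in\mathcal{S}$. A pattern $\mathcal{S}$ is irreducible if every matrix in $\mathbb{R}^{n\times n}_{\mathrm{exact}}(\mathcal{S})$ is irreducible. *)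

theory Defs
  imports "HOL-Analysis.Analysis" "HOL-Library.Uprod"
begin

text \<open>n x n real matrices are rendered as real^'n^'n (index type 'n finite, n = CARD('n)).
  Patterns are sets of unordered pairs of indices.\<close>

definition stochastic :: "real^'n^'n \<Rightarrow> bool" where
  "stochastic P \<longleftrightarrow> (\<forall>i j. P$i$j \<ge> 0) \<and> P *v (vec 1) = vec 1"

definition prob_vector :: "real^'n \<Rightarrow> bool" where
  "prob_vector p \<longleftrightarrow> (\<forall>i. p$i \<ge> 0) \<and> (\<Sum>i\<in>UNIV. p$i) = 1"

definition stationary_dist :: "real^'n^'n \<Rightarrow> real^'n \<Rightarrow> bool" where
  "stationary_dist P p \<longleftrightarrow> prob_vector p \<and> p v* P = p"

definition irreducible_mat :: "real^'n^'n \<Rightarrow> bool" where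
  "irreducible_mat A \<longleftrightarrow> (\<forall>i j. (i, j) \<in> {(k, l). A$k$l \<noteq> 0}\<^sup>+)"

definition reversible :: "real^'n^'n \<Rightarrow> bool" where
  "reversible P \<longleftrightarrow> stochastic P \<and> irreducible_mat P \<and>
     (\<forall>p. stationary_dist P p \<longrightarrow> (\<forall>i j. p$i * P$i$j = p$j * P$j$i))"

definition pattern :: "('n::finite) uprod set \<Rightarrow> bool" where
  "pattern S \<longleftrightarrow> (\<forall>i. Upair i i \<in> S)"

definition pat_mats :: "('n::finite) uprod set \<Rightarrow> (real^'n^'n) set" where
  "pat_mats S = {D. \<forall>i j. Upair i j \<notin> S \<longrightarrow> D$i$j = 0 \<and> D$j$i = 0}"

definition exact_pat_mats :: "('n::finite) uprod set \<Rightarrow> (real^'n^'n) set" where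
  "exact_pat_mats S = {D. \<forall>i j. (D$i$j \<noteq> 0 \<and> D$j$i \<noteq> 0) \<longleftrightarrow> Upair i j \<in> S}"

definition irreducible_pattern :: "('n::finite) uprod set \<Rightarrow> bool" where
  "irreducible_pattern S \<longleftrightarrow> pattern S \<and> (\<forall>D \<in> exact_pat_mats S. irreducible_mat D)"

end

theory Submission
  imports Defs
begin

text \<open>(i) Put \<open>X\<^sub>i\<^sub>j = \<pi>\<^sub>j / 2\<close> on the off-diagonal pairs of \<open>S\<close> and fill the diagonal so that
  the rows sum to 1. Then \<open>\<pi>\<^sub>i X\<^sub>i\<^sub>j = \<pi>\<^sub>i \<pi>\<^sub>j / 2\<close> is symmetric and every diagonal entry is
  at least \<open>1/2\<close>, so \<open>X\<close> has exactly the pattern \<open>S\<close> and is irreducible. Reversibility asks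
  for detailed balance with respect to every stationary distribution; for an irreducible chain
  the stationary distribution is unique by the maximum principle for harmonic vectors.
  (ii) \<open>P\<close> itself belongs to the set.\<close>

definition detailed_balance :: "real^'n^'n \<Rightarrow> real^'n \<Rightarrow> bool" where
  "detailed_balance X p \<longleftrightarrow> (\<forall>i j. p$i * X$i$j = p$j * X$j$i)"

lemma row_sum_eq_1_iff: "X *v vec 1 = vec 1 \<longleftrightarrow> (\<forall>i. (\<Sum>j\<in>UNIV. X$i$j) = (1::real))"
  by (simp add: matrix_vector_mult_def vec_eq_iff)

lemma stochastic_row_sum: "stochastic X \<Longrightarrow> (\<Sum>j\<in>UNIV. X$i$j) = 1"
  unfolding stochastic_def row_sum_eq_1_iff by blast

lemma detailed_balance_stationary:
  assumes "X *v vec 1 = vec 1" and "detailed_balance X p"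
  shows "p v* X = p"
proof -
  have "(\<Sum>i\<in>UNIV. p$i * X$i$j) = p$j" for j
  proof -
    have "(\<Sum>i\<in>UNIV. p$i * X$i$j) = (\<Sum>i\<in>UNIV. p$j * X$j$i)"
      using assms(2) by (simp add: detailed_balance_def)
    also have "\<dots> = p$j"
      using assms(1) unfolding row_sum_eq_1_iff by (simp flip: sum_distrib_left)
    finally show ?thesis .
  qed
  then show ?thesis by (simp add: vector_matrix_mult_def vec_eq_iff mult.commute)
qed

text \<open>Maximum principle: the maximum of a harmonic vector propagates along every edge
  of the transition graph, hence by irreducibility to every state.\<close>

lemma stochastic_irreducible_harmonic_const:
  fixes X :: "real^'n^'n"
  assumes st: "stochastic X" and irr: "irreducible_mat X" and harm: "X *v h = h"
  shows "h$i = h$j"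
proof -
  define M where "M = Max (range (\<lambda>k. h$k))"
  have le_M: "h$k \<le> M" for k
    by (simp add: M_def)
  obtain k0 where k0: "h$k0 = M"
    using Max_in[of "range (\<lambda>k. h$k)"] by (fastforce simp: M_def)
  have propagate: "h$l = M" if "h$k = M" and "X$k$l \<noteq> 0" for k l
  proof -
    have "(\<Sum>m\<in>UNIV. X$k$m * (M - h$m)) = M * (\<Sum>m\<in>UNIV. X$k$m) - (X *v h)$k"
      by (simp add: matrix_vector_mult_def algebra_simps sum_subtractf sum_distrib_left)
    also have "\<dots> = 0"
      using stochastic_row_sum[OF st] harm that(1) by simp
    finally have "(\<Sum>m\<in>UNIV. X$k$m * (M - h$m)) = 0" .
    moreover have "X$k$m * (M - h$m) \<ge> 0" for m
      using st le_M[of m] by (simp add: stochastic_def)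
    ultimately have "X$k$l * (M - h$l) = 0"
      by (simp add: sum_nonneg_eq_0_iff)
    with that(2) show ?thesis by simp
  qed
  have all_M: "h$l = M" for l
  proof -
    have "(k0, l) \<in> {(k, l). X$k$l \<noteq> 0}\<^sup>+"
      using irr by (simp add: irreducible_mat_def)
    then show ?thesis
      by (induction rule: trancl_induct) (use k0 propagate in auto)
  qed
  show ?thesis
    by (simp add: all_M)
qed

text \<open>If \<open>p\<close> is a positive detailed-balance vector, then \<open>q / p\<close> is harmonic for every
  stationary \<open>q\<close>, so \<open>q\<close> is a multiple of \<open>p\<close>.\<close>

lemma stationary_detailed_balance:
  fixes X :: "real^'n^'n"
  assumes st: "stochastic X" and irr: "irreducible_mat X"
    and pos: "\<forall>i. p$i > 0" and db: "detailed_balance X p" and stat: "q v* X = q"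
  shows "detailed_balance X q"
proof -
  define h where "h = (\<chi> i. q$i / p$i)"
  have q_eq: "q$i = p$i * h$i" for i
    using pos[rule_format, of i] by (simp add: h_def)
  have db': "p$i * X$i$j = p$j * X$j$i" for i j
    using db by (simp add: detailed_balance_def)
  have "(X *v h)$j = h$j" for j
  proof -
    have "p$j * (X *v h)$j = (\<Sum>i\<in>UNIV. (p$j * X$j$i) * h$i)"
      by (simp add: matrix_vector_mult_def sum_distrib_left mult.assoc)
    also have "\<dots> = (\<Sum>i\<in>UNIV. q$i * X$i$j)"
      by (rule sum.cong) (simp_all only: db'[symmetric] q_eq mult_ac)
    also have "\<dots> = q$j"
      using stat by (simp add: vector_matrix_mult_def vec_eq_iff mult.commute)
    finally show ?thesis
      using pos[rule_format, of j] q_eq[of j] by simp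
  qed
  then have h_const: "h$i = h$j" for i j
    using stochastic_irreducible_harmonic_const[OF st irr] by (simp add: vec_eq_iff)
  have "q$i * X$i$j = q$j * X$j$i" for i j
  proof -
    have "q$i * X$i$j = h$i * (p$i * X$i$j)"
      by (simp add: q_eq)
    also have "\<dots> = h$j * (p$j * X$j$i)"
      by (simp only: db' h_const[of i j])
    also have "\<dots> = q$j * X$j$i"
      by (simp add: q_eq)
    finally show ?thesis .
  qed
  then show ?thesis
    by (simp add: detailed_balance_def)
qed

lemma reversibleI:
  assumes "stochastic X" and "irreducible_mat X"
    and "\<forall>i. p$i > 0" and "detailed_balance X p"
  shows "reversible X"
  using assms stationary_detailed_balance[OF assms]
  unfolding reversible_def stationary_dist_def detailed_balance_def by blast

definition fill_diagonal :: "real^'n^'n \<Rightarrow> real^'n^'n" where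
  "fill_diagonal A = (\<chi> i j. if i = j then 1 - (\<Sum>k\<in>UNIV - {i}. A$i$k) else A$i$j)"

lemma fill_diagonal_off_diag [simp]: "i \<noteq> j \<Longrightarrow> fill_diagonal A $ i $ j = A$i$j"
  by (simp add: fill_diagonal_def)

lemma fill_diagonal_diag: "fill_diagonal A $ i $ i = 1 - (\<Sum>k\<in>UNIV - {i}. A$i$k)"
  by (simp add: fill_diagonal_def)

lemma fill_diagonal_row_sum: "fill_diagonal A *v vec 1 = vec 1"
  unfolding row_sum_eq_1_iff
proof
  fix i
  have "(\<Sum>j\<in>UNIV. fill_diagonal A $ i $ j)
      = fill_diagonal A $ i $ i + (\<Sum>j\<in>UNIV - {i}. fill_diagonal A $ i $ j)"
    by (simp add: sum.remove[of UNIV i])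
  also have "\<dots> = fill_diagonal A $ i $ i + (\<Sum>j\<in>UNIV - {i}. A $ i $ j)"
    using sum.cong[of "UNIV - {i}" "UNIV - {i}" "\<lambda>j. fill_diagonal A $ i $ j" "\<lambda>j. A $ i $ j"]
    by simp
  also have "\<dots> = 1"
    by (simp add: fill_diagonal_diag)
  finally show "(\<Sum>j\<in>UNIV. fill_diagonal A $ i $ j) = 1" .
qed

lemma fill_diagonal_detailed_balance:
  "detailed_balance A p \<Longrightarrow> detailed_balance (fill_diagonal A) p"
  by (simp add: detailed_balance_def fill_diagonal_def)

lemma Upair_commute: "Upair a b = Upair b a"
  by simp

text \<open>Symmetric proposal \<open>1/2\<close> on the edges of \<open>S\<close>, accepted with probability \<open>p$j\<close>;
  the halving keeps every diagonal entry at least \<open>1/2\<close>, so that the diagonal pairs of \<open>S\<close>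
  are realised exactly.\<close>

definition pattern_chain :: "real^'n \<Rightarrow> 'n uprod set \<Rightarrow> real^'n^'n" where
  "pattern_chain p S = fill_diagonal (\<chi> i j. if Upair i j \<in> S then p$j / 2 else 0)"

lemma pattern_chain_off_diag:
  "i \<noteq> j \<Longrightarrow> pattern_chain p S $ i $ j = (if Upair i j \<in> S then p$j / 2 else 0)"
  by (simp add: pattern_chain_def)

lemma pattern_chain_detailed_balance: "detailed_balance (pattern_chain p S) p"
  unfolding pattern_chain_def
  by (rule fill_diagonal_detailed_balance) (simp add: detailed_balance_def Upair_commute)

lemma pattern_chain_diag_pos:
  assumes "prob_vector p"
  shows "pattern_chain p S $ i $ i > 0"
proof -
  have "(\<Sum>k\<in>UNIV - {i}. if Upair i k \<in> S then p$k / 2 else 0) \<le> (\<Sum>k\<in>UNIV - {i}. p$k / 2)"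
    using assms by (intro sum_mono) (auto simp: prob_vector_def)
  also have "\<dots> \<le> (\<Sum>k\<in>UNIV. p$k / 2)"
    using assms by (intro sum_mono2) (auto simp: prob_vector_def)
  also have "\<dots> = 1 / 2"
    using assms by (simp add: prob_vector_def flip: sum_divide_distrib)
  finally show ?thesis
    by (simp add: pattern_chain_def fill_diagonal_diag)
qed

lemma pattern_chain_stochastic:
  assumes "prob_vector p"
  shows "stochastic (pattern_chain p S)"
proof -
  have "pattern_chain p S $ i $ j \<ge> 0" for i j
    using assms pattern_chain_diag_pos[OF assms, of S i]
    by (cases "i = j") (auto simp: pattern_chain_off_diag prob_vector_def)
  then show ?thesis
    unfolding stochastic_def pattern_chain_def using fill_diagonal_row_sum by blast
qed

lemma pattern_chain_in_pat_mats:
  assumes "pattern S"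
  shows "pattern_chain p S \<in> pat_mats S"
proof -
  have "i \<noteq> j" if "Upair i j \<notin> S" for i j
    using assms that by (auto simp: pattern_def)
  then show ?thesis
    by (auto simp: pat_mats_def pattern_chain_off_diag Upair_commute)
qed

lemma pattern_chain_in_exact_pat_mats:
  assumes "prob_vector p" and "\<forall>i. p$i > 0" and "pattern S"
  shows "pattern_chain p S \<in> exact_pat_mats S"
proof -
  have "(pattern_chain p S $ i $ j \<noteq> 0 \<and> pattern_chain p S $ j $ i \<noteq> 0) \<longleftrightarrow> Upair i j \<in> S"
    for i j
  proof (cases "i = j")
    case True
    then show ?thesis
      using assms pattern_chain_diag_pos[of p S i] by (simp add: pattern_def)
  next
    case False
    then show ?thesis
      using assms(2)[rule_format, of i] assms(2)[rule_format, of j]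
      by (auto simp: pattern_chain_off_diag Upair_commute)
  qed
  then show ?thesis
    by (simp add: exact_pat_mats_def)
qed

lemma exists_reversible_in_irreducible_pattern:
  assumes p: "prob_vector p" "\<forall>i. p$i > 0" and S: "irreducible_pattern S"
  shows "\<exists>X \<in> pat_mats S. reversible X \<and> stationary_dist X p \<and> detailed_balance X p"
proof (intro bexI conjI)
  let ?X = "pattern_chain p S"
  have pattern: "pattern S"
    using S by (simp add: irreducible_pattern_def)
  show "?X \<in> pat_mats S"
    using pattern by (rule pattern_chain_in_pat_mats)
  have "irreducible_mat ?X"
    using S pattern_chain_in_exact_pat_mats[OF p pattern] by (simp add: irreducible_pattern_def)
  with pattern_chain_stochastic[OF p(1)] show "reversible ?X"
    using p(2) pattern_chain_detailed_balance by (rule reversibleI)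
  have "?X *v vec 1 = vec 1"
    unfolding pattern_chain_def by (rule fill_diagonal_row_sum)
  then show "stationary_dist ?X p"
    using p(1) detailed_balance_stationary pattern_chain_detailed_balance
    unfolding stationary_dist_def by blast
  show "detailed_balance ?X p"
    by (rule pattern_chain_detailed_balance)
qed

lemma pat_mats_mono: "S \<subseteq> T \<Longrightarrow> pat_mats S \<subseteq> pat_mats T"
  by (auto simp: pat_mats_def)

lemma reversible_detailed_balance:
  "reversible P \<Longrightarrow> stationary_dist P p \<Longrightarrow> detailed_balance P p"
  by (simp add: reversible_def detailed_balance_def)

theorem proposition2p3:
  shows "(\<forall>(p::real^'n) (S::'n uprod set).
            prob_vector p \<and> (\<forall>i. p$i > 0) \<and> irreducible_pattern S \<longrightarrow>
            (\<exists>X \<in> pat_mats S. reversible X \<and> stationary_dist X p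
                \<and> (\<forall>i j. p$i * X$i$j = p$j * X$j$i)))
       \<and> (\<forall>(PP::'n uprod set) (S::'n uprod set) (P::real^'n^'n) (p::real^'n).
            pattern PP \<and> pattern S \<and> P \<in> pat_mats PP \<and> reversible P \<and> stationary_dist P p \<longrightarrow>
            {X \<in> pat_mats (S \<union> PP).
               (\<forall>i j. Upair i j \<in> PP - S \<longrightarrow> X$i$j = P$i$j)
               \<and> X *v (vec 1) = vec 1
               \<and> (\<forall>i j. p$i * X$i$j = p$j * X$j$i)
               \<and> (\<forall>i j. X$i$j \<ge> 0)} \<noteq> {})"
proof (intro conjI allI impI)
  fix p :: "real^'n" and S :: "'n uprod set"
  assume "prob_vector p \<and> (\<forall>i. p$i > 0) \<and> irreducible_pattern S"
  then show "\<exists>X \<in> pat_mats S. reversible X \<and> stationary_dist X p \<and> (\<forall>i j. p$i * X$i$j = p$j * X$j$i)"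
    using exists_reversible_in_irreducible_pattern unfolding detailed_balance_def by blast
next
  fix PP S :: "'n uprod set" and P :: "real^'n^'n" and p :: "real^'n"
  assume "pattern PP \<and> pattern S \<and> P \<in> pat_mats PP \<and> reversible P \<and> stationary_dist P p"
  then have "P \<in> pat_mats (S \<union> PP)" "stochastic P" "detailed_balance P p"
    using pat_mats_mono[of PP "S \<union> PP"] reversible_detailed_balance by (auto simp: reversible_def)
  then show "{X \<in> pat_mats (S \<union> PP).
               (\<forall>i j. Upair i j \<in> PP - S \<longrightarrow> X$i$j = P$i$j)
               \<and> X *v (vec 1) = vec 1
               \<and> (\<forall>i j. p$i * X$i$j = p$j * X$j$i)
               \<and> (\<forall>i j. X$i$j \<ge> 0)} \<noteq> {}"
    unfolding stochastic_def detailed_balance_def by blast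
qed

end
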